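(* Let $n\ge4$, let $0<\alpha_2,\alpha_3<1$, $\alpha_1=1-\alpha_2-\alpha_3$, and $\lambda^*=\big(\frac{n-1+\alpha_1}{n},\frac{\alpha_2}{n},\frac{\alpha_3}{n}\big)$. Let $i=(i_1,i_2,i_3)\in I$ with $i_2\ge1$, $i_3\ge1$, $i_2+i_3\ge3$. Then (a) if $i_2\ge1$ and $i_3\ge2$, $$|l_i(\lambda^* )|\le\frac{1-\alpha_3}{e(\ln n-\ln2)}\cdot\frac{\Gamma(n+1)}{i_1!\,\Gamma(n-i_1)}\cdot\frac{\nu_2(i_2)}{i_2^{1+\alpha_2}\,i_3(i_3-1)};$$ (b) if $i_2\ge2$ and $i_3\ge1$, $$|l_i(\lambda^* )|\le\frac{1-\alpha_2}{e(\ln n-\ln2)}\cdot\frac{\Gamma(n+1)}{i_1!\,\Gamma(n-i_1)}\cdot\frac{\nu_3(i_3)}{i_3^{1+\alpha_3}\,i_2(i_2-1)}.$$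
   Context: For an integer $n\ge1$ let $I=\{i=(i_1,i_2,i_3)\in\mathbb{Z}_+^3: i_1+i_2+i_3=n\}$ and $l_i(\lambda)=\prod_{s=1}^{3}\frac{1}{i_s!}\prod_{t=0}^{i_s-1}(n\lambda_s-t)$ for $\lambda=(\lambda_1,\lambda_2,\lambda_3)$ (Lagrange fundamental polynomials for the equally spaced nodes $i/n$ of a triangle in barycentric coordinates). For $p=2,3$ and positive integers $s$: $\nu_p(1)=\alpha_p$ and $\nu_p(s)=\alpha_p(1-\alpha_p)2^{\alpha_p}$ for $s\ge2$. *)

theory Defs
  imports "HOL-Analysis.Analysis"
begin

definition idx_set :: "nat \<Rightarrow> (nat \<times> nat \<times> nat) set" where
  "idx_set n = {(i1, i2, i3). i1 + i2 + i3 = n}"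

definition lag_factor :: "nat \<Rightarrow> nat \<Rightarrow> real \<Rightarrow> real" where
  "lag_factor n k x = (\<Prod>t<k. real n * x - real t) / fact k"

text \<open>Lagrange fundamental polynomial l_i(lambda) in barycentric coordinates.\<close>
definition lagr :: "nat \<Rightarrow> nat \<times> nat \<times> nat \<Rightarrow> real \<times> real \<times> real \<Rightarrow> real" where
  "lagr n i lam = (case i of (i1, i2, i3) \<Rightarrow> case lam of (l1, l2, l3) \<Rightarrow>
      lag_factor n i1 l1 * lag_factor n i2 l2 * lag_factor n i3 l3)"

definition nu :: "real \<Rightarrow> nat \<Rightarrow> real" where
  "nu a s = (if s = 1 then a else a * (1 - a) * 2 powr a)"

end

theory Submission
  imports Defs
begin

text \<open>
  At \<open>\<lambda>*\<close> the three factors of \<open>l_i\<close> are generalised binomial coefficients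
  \<open>(n - 1 + \<alpha>1 gchoose i1) (\<alpha>2 gchoose i2) (\<alpha>3 gchoose i3)\<close>.
  For \<open>0 < p < 1\<close> the quantity \<open>|p gchoose j| j^(1+p)\<close> is non-increasing from \<open>j = 2\<close> on
  (a Bernoulli-type inequality), which gives the factor \<open>\<nu>\<close>; and
  \<open>|q gchoose k| k (k - 1) = q (1 - q) \<Prod>s=1..k-2. (1 + (1 - q)/s)\<close>.
  Since \<open>\<alpha>1 \<le> 1 - q\<close>, the first coefficient is at most \<open>(n - 1 choose i1)\<close> times the product
  of \<open>1 + (1 - q)/s\<close> over the top \<open>i1\<close> values \<open>s \<le> n - 1\<close>, and these factors can be slid
  down to extend the previous product to \<open>s \<le> n - 3\<close>. That product is \<open>O(n^(1-q))\<close> by comparing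
  each factor with \<open>((s + c)/(s - 1 + c))^(1-q)\<close>, \<open>c = 1 - q/2\<close>, and the leftover \<open>n^q\<close> is traded
  for \<open>e q ln (n/2)\<close> through \<open>exp x \<ge> e x\<close>.
\<close>

lemma lag_factor_eq_gbinomial: "lag_factor n k y = (real n * y) gchoose k"
  by (simp add: lag_factor_def gbinomial_prod_rev atLeast0LessThan)

lemma gbinomial_Suc_right:
  fixes a :: "'a::field_char_0"
  shows "a gchoose Suc k = (a gchoose k) * (a - of_nat k) / of_nat (Suc k)"
  using gbinomial_mult_1[of a k] by (simp add: field_simps del: of_nat_Suc)

lemma abs_gbinomial_Suc_right:
  fixes a :: real
  assumes "a \<le> real k"
  shows "\<bar>a gchoose Suc k\<bar> = \<bar>a gchoose k\<bar> * (real k - a) / (real k + 1)"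
  using assms by (simp add: gbinomial_Suc_right abs_mult)

lemma abs_gbinomial_two:
  fixes p :: real
  assumes "0 \<le> p" "p \<le> 1"
  shows "\<bar>p gchoose 2\<bar> = p * (1 - p) / 2"
  using abs_gbinomial_Suc_right[of p 1] assms by (simp add: numeral_2_eq_2)

lemma diff_mult_powr_Suc_le:
  fixes j p :: real
  assumes "1 \<le> j" "0 \<le> p" "p \<le> 1"
  shows "(j - p) * (j + 1) powr p \<le> j powr (1 + p)"
proof -
  have pos: "0 < 1 + 1/j"
    using assms by (simp add: add_pos_nonneg)
  have "(1 + 1/j) powr p = exp (p * ln (1 + 1/j))"
    using pos by (simp add: powr_def)
  also have "\<dots> \<le> exp (p / j)"
    using assms pos ln_le_minus_one[of "1 + 1/j"] mult_left_mono[of "ln (1 + 1/j)" "1/j" p]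
    by simp
  finally have up: "(1 + 1/j) powr p \<le> exp (p / j)" .
  have down: "1 - p/j \<le> exp (- (p/j))"
    using exp_ge_add_one_self[of "- (p/j)"] by simp
  have "(1 - p/j) * (1 + 1/j) powr p \<le> exp (- (p/j)) * exp (p/j)"
    using up down assms by (intro mult_mono) (auto simp: field_simps)
  then have key: "(1 - p/j) * (1 + 1/j) powr p \<le> 1"
    by (simp add: exp_add[symmetric])
  have "j * (1 + 1/j) = j + 1"
    using assms by (simp add: field_simps)
  then have "(j + 1) powr p = j powr p * (1 + 1/j) powr p"
    using assms pos by (metis powr_mult )
  then have "(j - p) * (j + 1) powr p = j powr (1 + p) * ((1 - p/j) * (1 + 1/j) powr p)"
    using assms by (simp add: powr_add field_simps)
  also have "\<dots> \<le> j powr (1 + p)"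
    using key mult_left_mono[of _ 1 "j powr (1 + p)"] by simp
  finally show ?thesis .
qed

lemma abs_gbinomial_mult_powr_le:
  fixes p :: real
  assumes "0 < p" "p < 1"
  shows "\<bar>p gchoose (m + 2)\<bar> * real (m + 2) powr (1 + p) \<le> p * (1 - p) * 2 powr p"
proof (induction m)
  case 0
  show ?case
    unfolding add_0 using abs_gbinomial_two[of p] assms by (simp add: powr_add)
next
  case (Suc m)
  define j where "j = real (m + 2)"
  have j: "j \<ge> 1" "p \<le> j"
    using assms by (simp_all add: j_def)
  have "\<bar>p gchoose (Suc m + 2)\<bar> * real (Suc m + 2) powr (1 + p)
      = \<bar>p gchoose (m + 2)\<bar> * (j - p) / (j + 1) * ((j + 1) * (j + 1) powr p)"
    using abs_gbinomial_Suc_right[of p "m + 2"] j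
    by (simp add: j_def powr_add add_ac)
  also have "\<dots> = \<bar>p gchoose (m + 2)\<bar> * ((j - p) * (j + 1) powr p)"
    using j by (simp add: field_simps)
  also have "\<dots> \<le> \<bar>p gchoose (m + 2)\<bar> * j powr (1 + p)"
    using diff_mult_powr_Suc_le[of j p] j assms by (intro mult_left_mono) auto
  also have "\<dots> \<le> p * (1 - p) * 2 powr p"
    using Suc.IH by (simp add: j_def)
  finally show ?case .
qed

lemma abs_gbinomial_le_nu:
  fixes p :: real
  assumes "0 < p" "p < 1" "1 \<le> j"
  shows "\<bar>p gchoose j\<bar> \<le> nu p j / real j powr (1 + p)"
proof (cases "j = 1")
  case True
  then show ?thesis
    using assms by (simp add: nu_def)
next
  case False
  define m where "m = j - 2"
  have j: "j = m + 2"
    using assms(3) False by (simp add: m_def)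
  show ?thesis
    using abs_gbinomial_mult_powr_le[OF assms(1,2), of m] assms(3)
    by (simp add: j nu_def pos_le_divide_eq)
qed

lemma ln_ratio_scaled_le:
  fixes b t :: real
  assumes "0 \<le> b" "b \<le> 1" "0 \<le> t" "t < 1"
  shows "ln (1 + b * t) - ln (1 - b * t) \<le> b * (ln (1 + t) - ln (1 - t))"
proof -
  define f where "f s = b * (ln (1 + s) - ln (1 - s)) - (ln (1 + b * s) - ln (1 - b * s))"
    for s :: real
  have "f 0 \<le> f t"
  proof (rule DERIV_nonneg_imp_nondecreasing[OF assms(3)])
    fix s
    assume s: "0 \<le> s" "s \<le> t"
    have bs: "0 \<le> b * s" "b * s \<le> s" "s < 1"
      using s assms mult_right_mono[of b 1 s] by auto
    have "DERIV f s :> b * (1/(1+s) + 1/(1-s)) - (b / (1 + b * s) + b / (1 - b * s))"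
      unfolding f_def
      by (rule derivative_eq_intros refl | use bs in simp)+
    moreover have "1/(1+s) + 1/(1-s) = 2 / (1 - s\<^sup>2)"
      using bs by (simp add: field_simps power2_eq_square)
    moreover have "b / (1 + b * s) + b / (1 - b * s) = b * (2 / (1 - (b * s)\<^sup>2))"
      using bs by (simp add: field_simps power2_eq_square)
    moreover have "2 / (1 - (b * s)\<^sup>2) \<le> 2 / (1 - s\<^sup>2)"
      using bs by (intro divide_left_mono) (auto intro: power_mono simp: abs_less_iff power_less_one_iff)
    ultimately show "\<exists>y. DERIV f s :> y \<and> 0 \<le> y"
      using assms mult_left_mono by fastforce
  qed
  then show ?thesis
    by (simp add: f_def)
qed

lemma ratio_le_ratio_powr:
  fixes b y :: real
  assumes "0 \<le> b" "b \<le> 1" "1 < y"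
  shows "(y + b) / (y - b) \<le> ((y + 1) / (y - 1)) powr b"
proof -
  define t where "t = 1 / y"
  have t: "0 \<le> t" "t < 1" "b * t < 1" "0 \<le> b * t"
    using assms mult_right_mono[of b 1 t] by (auto simp: t_def)
  have "(y + b) / (y - b) = exp (ln (1 + b * t) - ln (1 - b * t))"
    using assms t by (simp add: exp_diff t_def field_simps)
  also have "\<dots> \<le> exp (b * (ln (1 + t) - ln (1 - t)))"
    using ln_ratio_scaled_le[OF assms(1,2) t(1,2)] by simp
  also have "\<dots> = ((y + 1) / (y - 1)) powr b"
    using assms t by (simp add: powr_def ln_div t_def field_simps)
  finally show ?thesis .
qed

text \<open>\<open>poch_ratio b m = pochhammer (1 + b) m / fact m\<close>.\<close>

definition poch_ratio :: "real \<Rightarrow> nat \<Rightarrow> real" where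
  "poch_ratio b m = (\<Prod>t<m. 1 + b / (real t + 1))"

lemma poch_ratio_0 [simp]: "poch_ratio b 0 = 1"
  by (simp add: poch_ratio_def)

lemma poch_ratio_Suc: "poch_ratio b (Suc m) = poch_ratio b m * (1 + b / (real m + 1))"
  by (simp add: poch_ratio_def)

lemma poch_ratio_ge_1: "0 \<le> b \<Longrightarrow> 1 \<le> poch_ratio b m"
  unfolding poch_ratio_def by (rule prod_ge_1) auto

lemma poch_ratio_mono:
  assumes "0 \<le> b" "j \<le> m"
  shows "poch_ratio b j \<le> poch_ratio b m"
  using assms(2)
proof (induction m rule: dec_induct)
  case (step m)
  have "poch_ratio b m \<le> poch_ratio b m * (1 + b / (real m + 1))"
    using poch_ratio_ge_1[OF assms(1), of m] assms(1) by simp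
  then show ?case
    using step.IH by (simp add: poch_ratio_Suc)
qed simp

lemma abs_gbinomial_Suc_Suc_eq_poch_ratio:
  fixes q :: real
  assumes "0 < q" "q < 1"
  shows "\<bar>q gchoose (m + 2)\<bar> * (real (m + 2) * (real (m + 2) - 1)) = q * (1 - q) * poch_ratio (1 - q) m"
proof (induction m)
  case 0
  show ?case
    unfolding add_0 using abs_gbinomial_two[of q] assms by simp
next
  case (Suc m)
  define j where "j = real m + 2"
  have j: "2 \<le> j" "q \<le> j"
    using assms by (simp_all add: j_def)
  have "\<bar>q gchoose (Suc m + 2)\<bar> * (real (Suc m + 2) * (real (Suc m + 2) - 1))
      = \<bar>q gchoose (m + 2)\<bar> * (j - q) / (j + 1) * ((j + 1) * j)"
    using abs_gbinomial_Suc_right[of q "m + 2"] j by (simp add: j_def add_ac)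
  also have "\<dots> = \<bar>q gchoose (m + 2)\<bar> * (j * (j - 1)) * ((j - q) / (j - 1))"
    using j by (simp add: field_simps)
  also have "\<dots> = q * (1 - q) * poch_ratio (1 - q) m * ((j - q) / (j - 1))"
    using Suc.IH by (simp only: j_def of_nat_add of_nat_numeral)
  also have "(j - q) / (j - 1) = 1 + (1 - q) / (real m + 1)"
    using j by (simp add: j_def field_simps)
  finally show ?case
    by (simp add: poch_ratio_Suc)
qed

lemma poch_ratio_le_powr:
  fixes b :: real
  assumes "0 < b" "b \<le> 1"
  defines "c \<equiv> (1 + b) / 2"
  shows "poch_ratio b m \<le> ((real m + c) / c) powr b"
proof (induction m)
  case (Suc m)
  define y where "y = 2 * real m + 2 + b"
  have "0 < c"
    using assms by (simp add: c_def)
  then have c: "0 < c" "0 < real m + c"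
    by simp_all
  have y: "1 < y" "1 + b / (real m + 1) = (y + b) / (y - b)"
    using assms by (simp_all add: y_def field_simps)
  have ratio: "(y + 1) / (y - 1) = (real (Suc m) + c) / (real m + c)"
    using c by (simp add: y_def c_def field_simps)
  have "poch_ratio b (Suc m) = poch_ratio b m * ((y + b) / (y - b))"
    by (simp add: poch_ratio_Suc y)
  also have "\<dots> \<le> ((real m + c) / c) powr b * ((y + 1) / (y - 1)) powr b"
    using Suc.IH ratio_le_ratio_powr[of b y] poch_ratio_ge_1[of b m] y assms
    by (intro mult_mono) auto
  also have "\<dots> = ((real (Suc m) + c) / c) powr b"
    unfolding ratio using c by (simp add: powr_mult[symmetric])
  finally show ?case .
qed (use assms in \<open>simp add: c_def\<close>)

lemma poch_ratio_mult_tail_le: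
  fixes b :: real
  assumes "0 \<le> b" "j + i \<le> N"
  shows "poch_ratio b j * (\<Prod>t<i. 1 + b / (real N - real t)) \<le> poch_ratio b (j + i)"
  using assms(2)
proof (induction i arbitrary: j)
  case (Suc i)
  have "real j + 1 \<le> real N - real i"
    using Suc.prems by simp
  then have "b / (real N - real i) \<le> b / (real j + 1)"
    using assms(1) by (intro divide_left_mono) auto
  then have head: "poch_ratio b j * (1 + b / (real N - real i)) \<le> poch_ratio b (Suc j)"
    using poch_ratio_ge_1[OF assms(1), of j] by (simp add: poch_ratio_Suc mult_left_mono)
  have tail: "0 \<le> (\<Prod>t<i. 1 + b / (real N - real t))"
    using Suc.prems assms(1) by (intro prod_nonneg) auto
  have "poch_ratio b j * (\<Prod>t<Suc i. 1 + b / (real N - real t))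
      = poch_ratio b j * (1 + b / (real N - real i)) * (\<Prod>t<i. 1 + b / (real N - real t))"
    by (simp add: ac_simps)
  also have "\<dots> \<le> poch_ratio b (Suc j) * (\<Prod>t<i. 1 + b / (real N - real t))"
    using head tail by (rule mult_right_mono)
  also have "\<dots> \<le> poch_ratio b (j + Suc i)"
    using Suc.IH[of "Suc j"] Suc.prems by simp
  finally show ?case .
qed simp

lemma exp_1_mult_le_exp: "exp 1 * x \<le> exp x" for x :: real
  using exp_ge_add_one_self[of "x - 1"] by (simp add: exp_diff field_simps)

lemma two_powr_mult_powr_ge_1:
  fixes q :: real
  assumes "0 < q" "q < 1"
  shows "1 \<le> 2 powr q * (1 - q / 2) powr (1 - q)"
proof -
  have "ln (1 / (1 - q / 2)) \<le> 1 / (1 - q / 2) - 1"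
    using assms by (intro ln_le_minus_one) auto
  then have "- q / (2 - q) \<le> ln (1 - q / 2)"
    using assms by (simp add: ln_div field_simps)
  then have "(1 - q) * (- q / (2 - q)) \<le> (1 - q) * ln (1 - q / 2)"
    using assms by (intro mult_left_mono) auto
  moreover have "- q / 2 \<le> (1 - q) * (- q / (2 - q))"
    using assms by (simp add: field_simps)
  moreover have "q / 2 \<le> q * ln 2"
    using ln2_ge_two_thirds assms by simp
  ultimately have "0 \<le> q * ln 2 + (1 - q) * ln (1 - q / 2)"
    by linarith
  then show ?thesis
    using assms by (simp add: powr_def exp_add[symmetric])
qed

lemma mult_poch_ratio_le:
  fixes q :: real
  assumes "0 < q" "q < 1" "3 \<le> n"
  defines "L \<equiv> ln (real n) - ln 2"
  shows "q * poch_ratio (1 - q) (n - 3) \<le> real n / (exp 1 * L)"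
proof -
  define b where "b = 1 - q"
  define c where "c = 1 - q / 2"
  have b: "0 < b" "b \<le> 1" and c: "0 < c" "c \<le> 1"
    using assms by (auto simp: b_def c_def)
  have n: "2 < real n"
    using assms by simp
  then have L: "0 < L"
    by (simp add: L_def)
  have "(1 + b) / 2 = c"
    by (simp add: b_def c_def)
  then have "poch_ratio b (n - 3) \<le> ((real (n - 3) + c) / c) powr b"
    using poch_ratio_le_powr[OF b, of "n - 3"] by simp
  also have "\<dots> \<le> (real n / c) powr b"
    using assms c b by (intro powr_mono2 divide_right_mono) (auto simp: of_nat_diff)
  finally have bound: "poch_ratio b (n - 3) \<le> real n powr b / c powr b"
    using c n by (simp add: powr_divide)
  have "q * exp 1 * L \<le> exp (q * L) * (2 powr q * c powr b)"
    using exp_1_mult_le_exp[of "q * L"] two_powr_mult_powr_ge_1[OF assms(1,2)]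
      mult_mono[of "exp 1 * (q * L)" "exp (q * L)" 1 "2 powr q * c powr b"] assms L
    by (simp add: b_def c_def ac_simps)
  also have "\<dots> = real n powr q * c powr b"
    using n by (simp add: powr_def L_def exp_add[symmetric] algebra_simps)
  finally have key: "q * exp 1 * L \<le> real n powr q * c powr b" .
  have "real n powr q * real n powr b = real n"
    using n by (simp add: b_def flip: powr_add)
  then have "q * exp 1 * L * real n powr b \<le> real n * c powr b"
    using mult_right_mono[OF key, of "real n powr b"] by (simp add: ac_simps)
  then have "q * (real n powr b / c powr b) \<le> real n / (exp 1 * L)"
    using c L by (simp add: field_simps)
  then show ?thesis
    using bound assms order_trans mult_left_mono
    by (metis b_def less_eq_real_def)
qed

lemma abs_gbinomial_shift_le:
  fixes a b :: real
  assumes "-1 < a" "a \<le> b" "i \<le> N"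
  shows "\<bar>(real N + a) gchoose i\<bar> \<le> real (N choose i) * (\<Prod>t<i. 1 + b / (real N - real t))"
proof -
  have factor: "0 \<le> real N + a - real t"
      "real N + a - real t \<le> (real N - real t) * (1 + b / (real N - real t))" if "t < i" for t
  proof -
    have "0 < real N - real t"
      using that assms by simp
    then have "(real N - real t) * (1 + b / (real N - real t)) = real N - real t + b"
      by (simp add: field_simps)
    then show "0 \<le> real N + a - real t"
        "real N + a - real t \<le> (real N - real t) * (1 + b / (real N - real t))"
      using that assms by simp_all
  qed
  have "0 \<le> (\<Prod>t<i. real N + a - real t)"
    using factor(1) by (intro prod_nonneg) auto
  then have "\<bar>(real N + a) gchoose i\<bar> = (\<Prod>t<i. real N + a - real t) / fact i"
    by (simp add: gbinomial_prod_rev atLeast0LessThan)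
  also have "\<dots> \<le> (\<Prod>t<i. (real N - real t) * (1 + b / (real N - real t))) / fact i"
    using factor by (intro divide_right_mono prod_mono) auto
  also have "\<dots> = real (N choose i) * (\<Prod>t<i. 1 + b / (real N - real t))"
    by (simp add: prod.distrib binomial_gbinomial gbinomial_prod_rev atLeast0LessThan)
  finally show ?thesis .
qed

lemma Gamma_ratio_eq_binomial:
  assumes "i < n"
  shows "Gamma (real n + 1) / (fact i * Gamma (real n - real i)) = real n * real (n - 1 choose i)"
proof -
  have "Gamma (real n + 1) = fact n"
    using Gamma_fact[of n] by (simp add: add.commute)
  moreover have "Gamma (real n - real i) = fact (n - 1 - i)"
    using Gamma_fact[of "n - 1 - i"] assms by (simp add: of_nat_diff)
  moreover have "(fact n :: real) = real n * fact (n - 1)"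
    using assms by (simp add: fact_reduce)
  ultimately show ?thesis
    using assms by (simp add: binomial_fact)
qed

lemma abs_gbinomial_triple_le:
  fixes n i j k :: nat and p q :: real
  assumes "0 < p" "p < 1" "0 < q" "q < 1" "i + j + k = n" "1 \<le> j" "2 \<le> k"
  shows "\<bar>((real n - 1 + (1 - p - q)) gchoose i) * (p gchoose j) * (q gchoose k)\<bar> \<le>
     (1 - q) / (exp 1 * (ln (real n) - ln 2))
     * (Gamma (real n + 1) / (fact i * Gamma (real n - real i)))
     * (nu p j / (real j powr (1 + p) * (real k * (real k - 1))))"
proof -
  define N where "N = n - 1"
  define m where "m = k - 2"
  define Q where "Q = (\<Prod>t<i. 1 + (1 - q) / (real N - real t))"
  define E where "E = exp 1 * (ln (real n) - ln 2)"
  have N: "real N = real n - 1" "m + i \<le> N" "i < n"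
    using assms by (auto simp: N_def m_def of_nat_diff)
  have E: "0 < E"
    using assms by (simp add: E_def)
  have Q: "0 \<le> Q"
    using N assms by (auto simp: Q_def intro!: prod_nonneg)
  have first: "\<bar>(real n - 1 + (1 - p - q)) gchoose i\<bar> \<le> real (N choose i) * Q"
    using abs_gbinomial_shift_le[of "1 - p - q" "1 - q" i N] N assms by (simp add: Q_def)
  have second: "\<bar>p gchoose j\<bar> \<le> nu p j / real j powr (1 + p)"
    using abs_gbinomial_le_nu assms by blast
  have "k = m + 2" "0 < real k * (real k - 1)"
    using assms by (simp_all add: m_def)
  then have third: "\<bar>q gchoose k\<bar> = q * (1 - q) * poch_ratio (1 - q) m / (real k * (real k - 1))"
    using abs_gbinomial_Suc_Suc_eq_poch_ratio[of q m] assms by (simp add: eq_divide_eq)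
  have "poch_ratio (1 - q) m * Q \<le> poch_ratio (1 - q) (m + i)"
    using poch_ratio_mult_tail_le[of "1 - q" m i N] N assms by (simp add: Q_def)
  also have "\<dots> \<le> poch_ratio (1 - q) (n - 3)"
    using assms by (intro poch_ratio_mono) (auto simp: m_def)
  finally have "q * (poch_ratio (1 - q) m * Q) \<le> q * poch_ratio (1 - q) (n - 3)"
    using assms by simp
  also have "\<dots> \<le> real n / E"
    using mult_poch_ratio_le[of q n] assms by (simp add: E_def)
  finally have tail: "q * (poch_ratio (1 - q) m * Q) \<le> real n / E" .
  have "\<bar>((real n - 1 + (1 - p - q)) gchoose i) * (p gchoose j) * (q gchoose k)\<bar>
      \<le> real (N choose i) * Q * (nu p j / real j powr (1 + p)) * \<bar>q gchoose k\<bar>"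
    unfolding abs_mult using first second Q by (intro mult_right_mono mult_mono) auto
  also have "\<dots> = (1 - q) * real (N choose i) * (nu p j / (real j powr (1 + p) * (real k * (real k - 1))))
      * (q * (poch_ratio (1 - q) m * Q))"
    by (simp add: third)
  also have "\<dots> \<le> (1 - q) * real (N choose i) * (nu p j / (real j powr (1 + p) * (real k * (real k - 1))))
      * (real n / E)"
    using tail assms by (intro mult_left_mono) (auto simp: nu_def)
  also have "\<dots> = (1 - q) / E * (real n * real (N choose i))
      * (nu p j / (real j powr (1 + p) * (real k * (real k - 1))))"
    by (simp add: ac_simps)
  finally show ?thesis
    using Gamma_ratio_eq_binomial[OF N(3)] by (simp add: E_def N_def)
qed

theorem lemma20:
  fixes n i1 i2 i3 :: nat and \<alpha>1 \<alpha>2 \<alpha>3 :: real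
  assumes "n \<ge> 4"
    and "0 < \<alpha>2" "\<alpha>2 < 1" "0 < \<alpha>3" "\<alpha>3 < 1"
    and "\<alpha>1 = 1 - \<alpha>2 - \<alpha>3"
    and "(i1, i2, i3) \<in> idx_set n"
    and "i2 \<ge> 1" "i3 \<ge> 1" "i2 + i3 \<ge> 3"
  defines "lamst \<equiv> ((real n - 1 + \<alpha>1) / real n, \<alpha>2 / real n, \<alpha>3 / real n)"
  shows "(i2 \<ge> 1 \<and> i3 \<ge> 2 \<longrightarrow>
           \<bar>lagr n (i1, i2, i3) lamst\<bar> \<le>
             (1 - \<alpha>3) / (exp 1 * (ln (real n) - ln 2))
             * (Gamma (real n + 1) / (fact i1 * Gamma (real n - real i1)))
             * (nu \<alpha>2 i2 / (real i2 powr (1 + \<alpha>2) * (real i3 * (real i3 - 1)))))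
       \<and> (i2 \<ge> 2 \<and> i3 \<ge> 1 \<longrightarrow>
           \<bar>lagr n (i1, i2, i3) lamst\<bar> \<le>
             (1 - \<alpha>2) / (exp 1 * (ln (real n) - ln 2))
             * (Gamma (real n + 1) / (fact i1 * Gamma (real n - real i1)))
             * (nu \<alpha>3 i3 / (real i3 powr (1 + \<alpha>3) * (real i2 * (real i2 - 1)))))"
proof -
  have sum: "i1 + i2 + i3 = n" "i1 + i3 + i2 = n"
    using assms(7) by (auto simp: idx_set_def)
  have lagr: "lagr n (i1, i2, i3) lamst
      = ((real n - 1 + (1 - \<alpha>2 - \<alpha>3)) gchoose i1) * (\<alpha>2 gchoose i2) * (\<alpha>3 gchoose i3)"
    using assms(1,6) by (simp add: lamst_def lagr_def lag_factor_eq_gbinomial)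
  then have lagr_swapped: "lagr n (i1, i2, i3) lamst
      = ((real n - 1 + (1 - \<alpha>3 - \<alpha>2)) gchoose i1) * (\<alpha>3 gchoose i3) * (\<alpha>2 gchoose i2)"
    by (simp add: ac_simps)
  show ?thesis
    using abs_gbinomial_triple_le[OF assms(2-5) sum(1)] abs_gbinomial_triple_le[OF assms(4,5,2,3) sum(2)]
    unfolding lagr[symmetric] lagr_swapped[symmetric] by blast
qed

end
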